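(* Let $E:\mathbb{R}^{N_x}\to\mathbb{R}$ be twice differentiable, and consider the optimal control problem (R): minimize $y(t_f)$ over state trajectories $(y(\cdot),\boldsymbol x(\cdot),\boldsymbol v(\cdot))$ with $y(t)\in\mathbb{R}$, $\boldsymbol x(t),\boldsymbol v(t)\in\mathbb{R}^{N_x}$, unconstrained controls $\boldsymbol u(t)\in\mathbb{R}^{N_x}$ and free final time $t_f$, subject to $\dot{\boldsymbol x}=\boldsymbol v$, $\dot{\boldsymbol v}=\boldsymbol u$, $\dot y=\nabla E(\boldsymbol x)\cdot\boldsymbol v$, $(\boldsymbol x(t_0),t_0)=(\boldsymbol x^0,t^0)$, $y(t_0)=E(\boldsymbol x^0)$, $\boldsymbol v(t_f)=\mathbf 0$, where $\boldsymbol x^0\in\mathbb{R}^{N_x}$ and $t^0$ are given, and $t_f$, $\boldsymbol x(t_f)$, $\boldsymbol v(t_0)$ are free. Then Problem (R) has no abnormal extremals; that is, for every extremal the cost multiplier $\nu_0$ is strictly positive.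
   Context: The Pontryagin Hamiltonian of (R) is $H(\boldsymbol\lambda_x,\boldsymbol\lambda_v,\lambda_y,\boldsymbol x,\boldsymbol v,y,\boldsymbol u)=\boldsymbol\lambda_x\cdot\boldsymbol v+\boldsymbol\lambda_v\cdot\boldsymbol u+\lambda_y\,\nabla E(\boldsymbol x)\cdot\boldsymbol v$. An extremal is a state–control trajectory together with costates $(\boldsymbol\lambda_x,\boldsymbol\lambda_v,\lambda_y)$ and a cost multiplier $\nu_0\ge 0$, not all multipliers vanishing (nontriviality), satisfying the adjoint equations $\dot{\boldsymbol\lambda}_x=-\lambda_y\nabla^2E(\boldsymbol x)\boldsymbol v$, $\dot{\boldsymbol\lambda}_v=-\boldsymbol\lambda_x-\lambda_y\nabla E(\boldsymbol x)$, $\dot\lambda_y=0$; the transversality conditions $\boldsymbol\lambda_x(t_f)=\mathbf 0$, $\boldsymbol\lambda_v(t_0)=\mathbf 0$, $\lambda_y(t_f)=\nu_0$; and the Hamiltonian minimization condition ($\boldsymbol u(t)$ minimizes $H$ over $\mathbb{R}^{N_x}$). An extremal is abnormal if $\nu_0=0$. *)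

theory Defs
  imports "HOL-Analysis.Analysis"
begin

text \<open>Problem (R).  The state space R^{N_x} is rendered as real^'n.
  gE is the gradient of E, hE its Hessian (as a matrix).\<close>

definition hamiltonian ::
  "(real^'n \<Rightarrow> real^'n) \<Rightarrow> real^'n \<Rightarrow> real^'n \<Rightarrow> real
    \<Rightarrow> real^'n \<Rightarrow> real^'n \<Rightarrow> real \<Rightarrow> real^'n \<Rightarrow> real" where
  "hamiltonian gE lx lv ly x v y u = lx \<bullet> v + lv \<bullet> u + ly * (gE x \<bullet> v)"

definition admissible_R ::
  "(real^'n \<Rightarrow> real) \<Rightarrow> (real^'n \<Rightarrow> real^'n) \<Rightarrow> real^'n \<Rightarrow> real \<Rightarrow> real
    \<Rightarrow> (real \<Rightarrow> real^'n) \<Rightarrow> (real \<Rightarrow> real^'n) \<Rightarrow> (real \<Rightarrow> real)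
    \<Rightarrow> (real \<Rightarrow> real^'n) \<Rightarrow> bool" where
  "admissible_R E gE x0 t0 tf x v y u \<longleftrightarrow>
     t0 \<le> tf \<and>
     (\<forall>t\<in>{t0..tf}. (x has_vector_derivative v t) (at t within {t0..tf})) \<and>
     (\<forall>t\<in>{t0..tf}. (v has_vector_derivative u t) (at t within {t0..tf})) \<and>
     (\<forall>t\<in>{t0..tf}. (y has_vector_derivative (gE (x t) \<bullet> v t)) (at t within {t0..tf})) \<and>
     x t0 = x0 \<and> y t0 = E x0 \<and> v tf = 0"

definition extremal_R ::
  "(real^'n \<Rightarrow> real) \<Rightarrow> (real^'n \<Rightarrow> real^'n) \<Rightarrow> (real^'n \<Rightarrow> real^'n^'n)
    \<Rightarrow> real^'n \<Rightarrow> real \<Rightarrow> real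
    \<Rightarrow> (real \<Rightarrow> real^'n) \<Rightarrow> (real \<Rightarrow> real^'n) \<Rightarrow> (real \<Rightarrow> real)
    \<Rightarrow> (real \<Rightarrow> real^'n)
    \<Rightarrow> (real \<Rightarrow> real^'n) \<Rightarrow> (real \<Rightarrow> real^'n) \<Rightarrow> (real \<Rightarrow> real) \<Rightarrow> real \<Rightarrow> bool" where
  "extremal_R E gE hE x0 t0 tf x v y u lx lv ly nu0 \<longleftrightarrow>
     admissible_R E gE x0 t0 tf x v y u \<and>
     nu0 \<ge> 0 \<and>
     \<not> (nu0 = 0 \<and> (\<forall>t\<in>{t0..tf}. lx t = 0 \<and> lv t = 0 \<and> ly t = 0)) \<and>
     (\<forall>t\<in>{t0..tf}. (lx has_vector_derivative (- (ly t *\<^sub>R (hE (x t) *v v t))))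
                       (at t within {t0..tf})) \<and>
     (\<forall>t\<in>{t0..tf}. (lv has_vector_derivative (- lx t - ly t *\<^sub>R gE (x t)))
                       (at t within {t0..tf})) \<and>
     (\<forall>t\<in>{t0..tf}. (ly has_vector_derivative 0) (at t within {t0..tf})) \<and>
     lx tf = 0 \<and> lv t0 = 0 \<and> ly tf = nu0 \<and>
     (\<forall>t\<in>{t0..tf}. \<forall>w.
        hamiltonian gE (lx t) (lv t) (ly t) (x t) (v t) (y t) (u t)
          \<le> hamiltonian gE (lx t) (lv t) (ly t) (x t) (v t) (y t) w)"

end

theory Submission
  imports Defs
begin

text \<open>The Hamiltonian is affine in the control, so minimizing it over all of R^{N_x} forces
  the costate of v to vanish identically.  Along an abnormal extremal the constant costate of y
  equals nu0 = 0 as well, and then the adjoint equation for the costate of v, whose left side is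
  now 0, gives lambda_x = - lambda_y grad E(x) = 0 (at a degenerate interval use the
  transversality condition at tf instead).  All multipliers vanish, contradicting nontriviality.
  No regularity of E is needed.\<close>

lemma inner_minimized_imp_zero:
  fixes a b :: "'a::real_inner"
  assumes "\<And>w. a \<bullet> b \<le> a \<bullet> w"
  shows "a = 0"
proof -
  have "a \<bullet> b \<le> a \<bullet> (b - a)" by (fact assms)
  then have "a \<bullet> a \<le> 0" by (simp add: inner_diff_right)
  then show ?thesis by (metis inner_eq_zero_iff inner_ge_zero order_antisym)
qed

lemma has_vector_derivative_vanishing_on_interval:
  fixes f :: "real \<Rightarrow> 'a::real_normed_vector"
  assumes "a < b" and t: "t \<in> {a..b}"
    and vanish: "\<And>s. s \<in> {a..b} \<Longrightarrow> f s = 0"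
    and deriv: "(f has_vector_derivative f') (at t within {a..b})"
  shows "f' = 0"
proof -
  have "((\<lambda>_. 0) has_vector_derivative 0) (at t within {a..b})" by simp
  then have "(f has_vector_derivative 0) (at t within {a..b})"
    using has_vector_derivative_transform[of t "{a..b}" f "\<lambda>_. 0" 0] t vanish by simp
  moreover have "cbox a b = {a..b}" by (simp add: cbox_interval)
  ultimately show ?thesis
    using vector_derivative_unique_within_closed_interval[of a b t f f' 0] assms(1) t deriv
    by simp
qed

lemma extremal_R_abnormal_costates_vanish:
  assumes ext: "extremal_R E gE hE x0 t0 tf x v y u lx lv ly 0"
    and t: "t \<in> {t0..tf}"
  shows "lx t = 0 \<and> lv t = 0 \<and> ly t = 0"
proof -
  have le: "t0 \<le> tf" using ext unfolding extremal_R_def admissible_R_def by blast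
  have lv0: "lv s = 0" if s: "s \<in> {t0..tf}" for s
  proof (rule inner_minimized_imp_zero)
    fix w
    have "hamiltonian gE (lx s) (lv s) (ly s) (x s) (v s) (y s) (u s)
          \<le> hamiltonian gE (lx s) (lv s) (ly s) (x s) (v s) (y s) w"
      using ext s unfolding extremal_R_def by blast
    then show "lv s \<bullet> u s \<le> lv s \<bullet> w" by (simp add: hamiltonian_def)
  qed
  have "\<And>s. s \<in> {t0..tf} \<Longrightarrow> (ly has_vector_derivative 0) (at s within {t0..tf})"
    using ext unfolding extremal_R_def by blast
  then obtain c where c: "\<And>s. s \<in> {t0..tf} \<Longrightarrow> ly s = c"
    using has_vector_derivative_zero_constant[of "{t0..tf}" ly] convex_real_interval(5) by blast
  have "ly tf = 0" using ext unfolding extremal_R_def by blast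
  then have ly0: "ly s = 0" if "s \<in> {t0..tf}" for s
    using c[of tf] c[OF that] le by simp
  have "lx t = 0"
  proof (cases "t0 < tf")
    case True
    have "(lv has_vector_derivative (- lx t - ly t *\<^sub>R gE (x t))) (at t within {t0..tf})"
      using ext t unfolding extremal_R_def by blast
    then have "- lx t - ly t *\<^sub>R gE (x t) = 0"
      using has_vector_derivative_vanishing_on_interval True t lv0 by blast
    then show ?thesis using ly0[OF t] by simp
  next
    case False
    then have "t = tf" using t by simp
    then show ?thesis using ext unfolding extremal_R_def by blast
  qed
  then show ?thesis using lv0[OF t] ly0[OF t] by simp
qed

theorem lemma1:
  fixes E :: "real^'n \<Rightarrow> real"
    and gE :: "real^'n \<Rightarrow> real^'n"
    and hE :: "real^'n \<Rightarrow> real^'n^'n"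
  assumes grad: "\<And>z. (E has_derivative (\<lambda>h. gE z \<bullet> h)) (at z)"
    and hess: "\<And>z. (gE has_derivative (\<lambda>h. hE z *v h)) (at z)"
    and ext: "extremal_R E gE hE x0 t0 tf x v y u lx lv ly nu0"
  shows "nu0 > 0"
proof (rule ccontr)
  assume "\<not> nu0 > 0"
  with ext have abnormal: "extremal_R E gE hE x0 t0 tf x v y u lx lv ly 0"
    by (simp add: extremal_R_def)
  then have "\<not> (\<forall>t\<in>{t0..tf}. lx t = 0 \<and> lv t = 0 \<and> ly t = 0)"
    by (simp add: extremal_R_def)
  with abnormal show False
    using extremal_R_abnormal_costates_vanish by blast
qed

end
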